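(* Let $X$ be a real Banach space, $f\in\Gamma_0(X)$ and $f(\bar x)=0$. Then $$|\partial f|_{\rm bd}(\bar x)=\inf\{\varepsilon>0\mid \mathrm{Er}\{\mathrm{Ptb}(f,\bar x,\varepsilon)\}(\bar x)=0\}=\inf\{\varepsilon>0\mid \mathrm{Er}\{\mathrm{Ptb}_c(f,\bar x,\varepsilon)\}(\bar x)=0\}=\inf\{\varepsilon>0\mid \mathrm{Er}\{\mathrm{Ptb}_l(f,\bar x,\varepsilon)\}(\bar x)=0\}.$$
   Context: $X^*$ is the dual of $X$, $\mathbb{B}^*$ its closed unit ball. $\Gamma_0(X)$ denotes the class of extended-real-valued proper convex lower semicontinuous functions on $X$. For convex $f$ and $x\in\mathrm{dom} f$, $\partial f(x):=\{x^*\in X^*\mid \langle x^*,u-x\rangle\le f(u)-f(x)\ \forall u\in X\}$. $d(x,S)=\inf_{u\in S}\|u-x\|$ with $d(x,\emptyset)=+\infty$; $\inf\emptyset=+\infty$. $S_f:=\{x\in X\mid f(x)\le0\}$. The local error bound modulus is $\mathrm{Er}\,f(\bar x):=\liminf_{x\to\bar x,\ f(x)>0}\frac{f(x)}{d(x,S_f)}$. The boundary subdifferential slope is $|\partial f|_{\rm bd}(\bar x):=d(0,\mathrm{bd}\,\partial f(\bar x))$ (boundary in the norm topology of $X^*$). For $f(\bar x)<\infty$ and $\varepsilon\ge0$: $g:X\to\mathbb{R}\cup\{+\infty\}$ is an $\varepsilon$-perturbation of $f$ near $\bar x$ if $g(\bar x)=f(\bar x)$ and $\limsup_{x\to\bar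 x}\frac{|g(x)-f(x)|}{\|x-\bar x\|}\le\varepsilon$; the set of these is $\mathrm{Ptb}(f,\bar x,\varepsilon)$. $\mathrm{Ptb}_c(f,\bar x,\varepsilon):=\{g\in\mathrm{Ptb}(f,\bar x,\varepsilon)\mid g-f\in\Gamma_0(X)\}$, and $\mathrm{Ptb}_l(f,\bar x,\varepsilon):=\{g\mid g(u)-f(u)=\langle x^*,u-\bar x\rangle\ (u\in X)\text{ for some }x^*\in\varepsilon\mathbb{B}^*\}$. Further, $\mathrm{Er}\{\mathrm{Ptb}(f,\bar x,\varepsilon)\}(\bar x):=\inf_{g\in\Gamma_0(X)\cap\mathrm{Ptb}(f,\bar x,\varepsilon)}\mathrm{Er}\,g(\bar x)$, $\mathrm{Er}\{\mathrm{Ptb}_c(f,\bar x,\varepsilon)\}(\bar x):=\inf_{g\in\mathrm{Ptb}_c(f,\bar x,\varepsilon)}\mathrm{Er}\,g(\bar x)$, $\mathrm{Er}\{\mathrm{Ptb}_l(f,\bar x,\varepsilon)\}(\bar x):=\inf_{g\in\mathrm{Ptb}_l(f,\bar x,\varepsilon)}\mathrm{Er}\,g(\bar x)$. *)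

theory Defs
  imports "HOL-Analysis.Analysis"
begin

text \<open>The dual space X* is 'a \<Rightarrow>L real (bounded linear
  functionals) with its operator norm; its topology is the norm topology.\<close>

definition proper_fun :: "('a \<Rightarrow> ereal) \<Rightarrow> bool" where
  "proper_fun f \<longleftrightarrow> (\<forall>x. f x \<noteq> -\<infinity>) \<and> (\<exists>x. f x \<noteq> \<infinity>)"

definition convex_efun :: "('a::real_vector \<Rightarrow> ereal) \<Rightarrow> bool" where
  "convex_efun f \<longleftrightarrow>
     (\<forall>x y t. 0 < t \<and> t < 1 \<longrightarrow>
        f (t *\<^sub>R x + (1 - t) *\<^sub>R y) \<le> ereal t * f x + ereal (1 - t) * f y)"

definition lsc_efun :: "('a::topological_space \<Rightarrow> ereal) \<Rightarrow> bool" where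
  "lsc_efun f \<longleftrightarrow> (\<forall>c. closed {x. f x \<le> c})"

definition Gamma0 :: "('a::real_normed_vector \<Rightarrow> ereal) \<Rightarrow> bool" where
  "Gamma0 f \<longleftrightarrow> proper_fun f \<and> convex_efun f \<and> lsc_efun f"

definition subdiff :: "('a::real_normed_vector \<Rightarrow> ereal) \<Rightarrow> 'a \<Rightarrow> ('a \<Rightarrow>\<^sub>L real) set" where
  "subdiff f x = {xs. \<forall>u. ereal (blinfun_apply xs (u - x)) \<le> f u - f x}"

definition edist_set :: "'b::metric_space \<Rightarrow> 'b set \<Rightarrow> ereal" where
  "edist_set x S = (if S = {} then \<infinity> else ereal (infdist x S))"

definition sublevel0 :: "('a \<Rightarrow> ereal) \<Rightarrow> 'a set" where
  "sublevel0 f = {x. f x \<le> 0}"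

definition Er :: "('a::real_normed_vector \<Rightarrow> ereal) \<Rightarrow> 'a \<Rightarrow> ereal" where
  "Er f xb = Liminf (at xb within {x. f x > 0}) (\<lambda>x. f x / edist_set x (sublevel0 f))"

definition bd_slope :: "('a::real_normed_vector \<Rightarrow> ereal) \<Rightarrow> 'a \<Rightarrow> ereal" where
  "bd_slope f xb = edist_set 0 (frontier (subdiff f xb))"

text \<open>|g(x) - f(x)|, with the convention that it is 0 where g(x) = f(x) = +\<infinity>.\<close>
definition absdiff :: "ereal \<Rightarrow> ereal \<Rightarrow> ereal" where
  "absdiff a b = (if a = b then 0 else \<bar>a - b\<bar>)"

definition Ptb :: "('a::real_normed_vector \<Rightarrow> ereal) \<Rightarrow> 'a \<Rightarrow> real \<Rightarrow> ('a \<Rightarrow> ereal) set" where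
  "Ptb f xb \<epsilon> = {g. g xb = f xb \<and>
      Limsup (at xb) (\<lambda>x. absdiff (g x) (f x) / ereal (norm (x - xb))) \<le> ereal \<epsilon>}"

definition Ptb_c :: "('a::real_normed_vector \<Rightarrow> ereal) \<Rightarrow> 'a \<Rightarrow> real \<Rightarrow> ('a \<Rightarrow> ereal) set" where
  "Ptb_c f xb \<epsilon> = {g. g \<in> Ptb f xb \<epsilon> \<and> (\<exists>h. Gamma0 h \<and> (\<forall>u. g u = f u + h u))}"

definition Ptb_l :: "('a::real_normed_vector \<Rightarrow> ereal) \<Rightarrow> 'a \<Rightarrow> real \<Rightarrow> ('a \<Rightarrow> ereal) set" where
  "Ptb_l f xb \<epsilon> = {g. \<exists>xs::'a \<Rightarrow>\<^sub>L real. norm xs \<le> \<epsilon> \<and>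
      (\<forall>u. g u = f u + ereal (blinfun_apply xs (u - xb)))}"

definition Er_Ptb :: "('a::real_normed_vector \<Rightarrow> ereal) \<Rightarrow> 'a \<Rightarrow> real \<Rightarrow> ereal" where
  "Er_Ptb f xb \<epsilon> = (INF g \<in> {g. Gamma0 g} \<inter> Ptb f xb \<epsilon>. Er g xb)"

definition Er_Ptb_c :: "('a::real_normed_vector \<Rightarrow> ereal) \<Rightarrow> 'a \<Rightarrow> real \<Rightarrow> ereal" where
  "Er_Ptb_c f xb \<epsilon> = (INF g \<in> Ptb_c f xb \<epsilon>. Er g xb)"

definition Er_Ptb_l :: "('a::real_normed_vector \<Rightarrow> ereal) \<Rightarrow> 'a \<Rightarrow> real \<Rightarrow> ereal" where
  "Er_Ptb_l f xb \<epsilon> = (INF g \<in> Ptb_l f xb \<epsilon>. Er g xb)"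

end

(* Write A for the subdifferential of f at xb.

   If xs is a boundary point of A with norm xs < eps, pick w small with xs + w outside A, so
   that f(u) < (xs + w)(u - xb) at some u. The tilt g = f + (w - xs)(. - xb) is a convex
   eps-perturbation with g >= w(. - xb): its zero sublevel set lies in the half-space
   w(. - xb) <= 0, while along the segment from xb to u the values of g grow at most at twice
   the rate of w(. - xb). Hence Er g(xb) <= 2 norm w, which is arbitrarily small.

   Conversely, let eps < b < |df|_bd(xb). Either f grows at least like b norm(. - xb), or f
   descends at rate b along some ray from xb: otherwise Hahn-Banach gives a subgradient of norm
   at most b, and a norming functional scaled by b lies outside A in the b-ball, so the segment
   between them meets the boundary of A inside the b-ball. Both alternatives survive
   eps-perturbations with a loss of eps and bound the error bound modulus of every convex
   perturbation from below.

   Since Ptb_l is contained in Ptb_c, which is contained in Gamma0 and Ptb, the three infima are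
   squeezed between these two estimates. *)

theory Submission
  imports Defs
begin

section \<open>Hahn--Banach for sublinear functionals\<close>

definition sublinear :: "('a::real_vector \<Rightarrow> real) \<Rightarrow> bool" where
  "sublinear p \<longleftrightarrow> (\<forall>x y. p (x + y) \<le> p x + p y) \<and> (\<forall>t x. 0 \<le> t \<longrightarrow> p (t *\<^sub>R x) = t * p x)"

definition dominated_subspaces :: "('a::real_vector \<Rightarrow> real) \<Rightarrow> ('a \<times> real) set set" where
  "dominated_subspaces p = {G. subspace G \<and> (\<forall>(x, a) \<in> G. a \<le> p x)}"

lemma sublinear_zero: "sublinear p \<Longrightarrow> p 0 = 0"
  unfolding sublinear_def by (metis mult_zero_left order_refl scaleR_zero_left)

lemma dominated_subspacesD:
  assumes "G \<in> dominated_subspaces p"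
  shows "subspace G" and "(x, a) \<in> G \<Longrightarrow> a \<le> p x"
  using assms by (auto simp: dominated_subspaces_def)

lemma dominated_subspaces_chain_bound:
  assumes "C \<in> chains (dominated_subspaces p)" and "sublinear p"
  shows "\<exists>U \<in> dominated_subspaces p. \<forall>X \<in> C. X \<subseteq> U"
proof (cases "C = {}")
  case True
  have "{0} \<in> dominated_subspaces p"
    using sublinear_zero[OF assms(2)] by (auto simp: dominated_subspaces_def subspace_def zero_prod_def)
  then show ?thesis using True by blast
next
  case False
  have sub: "C \<subseteq> dominated_subspaces p" and chain: "chain\<^sub>\<subseteq> C"
    using assms(1) by (auto simp: chains_def)
  have "subspace (\<Union>C)"
  proof (rule subspaceI)
    show "0 \<in> \<Union>C" using False sub by (auto simp: dominated_subspaces_def subspace_def)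
  next
    fix x y assume "x \<in> \<Union>C" "y \<in> \<Union>C"
    then obtain X Y where XY: "X \<in> C" "Y \<in> C" "x \<in> X" "y \<in> Y" by blast
    with chain have "X \<union> Y \<in> C" by (metis chain_subset_def sup.absorb1 sup.absorb2)
    moreover have "subspace (X \<union> Y)" using sub calculation by (auto simp: dominated_subspaces_def)
    ultimately show "x + y \<in> \<Union>C" using XY by (meson UnCI Union_iff subspace_add)
  next
    fix c x assume "x \<in> \<Union>C"
    then show "c *\<^sub>R x \<in> \<Union>C" using sub by (auto simp: dominated_subspaces_def subspace_def)
  qed
  moreover have "a \<le> p x" if "(x, a) \<in> \<Union>C" for x a
    using that sub by (auto dest: dominated_subspacesD)
  ultimately show ?thesis by (auto simp: dominated_subspaces_def)
qed

lemma dominated_subspace_single_valued: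
  assumes G: "G \<in> dominated_subspaces p" and p: "sublinear p" and "(x, a) \<in> G" "(x, b) \<in> G"
  shows "a = b"
proof -
  have "(0, a - b) \<in> G" "(0, b - a) \<in> G"
    using subspace_diff[OF dominated_subspacesD(1)[OF G]] assms(3,4) by force+
  then have "a - b \<le> p 0" "b - a \<le> p 0" using dominated_subspacesD(2)[OF G] by blast+
  then show ?thesis using sublinear_zero[OF p] by simp
qed

lemma dominated_subspace_extension_value:
  assumes M: "M \<in> dominated_subspaces p" and p: "sublinear p"
  obtains c where "\<And>y a. (y, a) \<in> M \<Longrightarrow> a - p (y - v) \<le> c"
    and "\<And>x b. (x, b) \<in> M \<Longrightarrow> c \<le> p (x + v) - b"
proof -
  have key: "a - p (y - v) \<le> p (x + v) - b" if "(x, b) \<in> M" "(y, a) \<in> M" for x b y a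
  proof -
    have "(x + y, b + a) \<in> M"
      using subspace_add[OF dominated_subspacesD(1)[OF M] that] by simp
    then have "a + b \<le> p (x + y)" using dominated_subspacesD(2)[OF M] by (simp add: add.commute)
    also have "\<dots> \<le> p (x + v) + p (y - v)"
      using p unfolding sublinear_def by (metis add.assoc add.commute diff_add_cancel)
    finally show ?thesis by simp
  qed
  define S where "S = {a - p (y - v) | y a. (y, a) \<in> M}"
  have zero: "(0, 0) \<in> M" using subspace_0[OF dominated_subspacesD(1)[OF M]] by (simp add: zero_prod_def)
  then have "S \<noteq> {}" and "bdd_above S"
    unfolding S_def bdd_above_def using key[OF zero] by blast+
  then show ?thesis
    by (intro that[of "Sup S"]) (auto intro!: cSup_upper cSup_least key simp: S_def)
qed

lemma dominated_subspace_extension_dominated: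
  assumes M: "M \<in> dominated_subspaces p" and p: "sublinear p" and "(x, a) \<in> M"
    and c_up: "\<And>y a. (y, a) \<in> M \<Longrightarrow> a - p (y - v) \<le> c"
    and c_lo: "\<And>x b. (x, b) \<in> M \<Longrightarrow> c \<le> p (x + v) - b"
  shows "a + t * c \<le> p (x + t *\<^sub>R v)"
proof -
  have hom: "\<And>t x. 0 \<le> t \<Longrightarrow> p (t *\<^sub>R x) = t * p x" using p by (auto simp: sublinear_def)
  have scale: "(s *\<^sub>R x, s * a) \<in> M" for s
    using subspace_scale[OF dominated_subspacesD(1)[OF M] \<open>(x, a) \<in> M\<close>, of s] by simp
  show ?thesis
  proof (cases t "0::real" rule: linorder_cases)
    case less
    have "a - p (x - (-t) *\<^sub>R v) = -t * (inverse (-t) * a - p (inverse (-t) *\<^sub>R x - v))"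
      using less hom[of "-t" "inverse (-t) *\<^sub>R x - v"] by (simp add: algebra_simps)
    also have "\<dots> \<le> -t * c" using c_up[OF scale[of "inverse (-t)"]] less by (intro mult_left_mono) auto
    finally show ?thesis by simp
  next
    case equal then show ?thesis using assms(3) M by (auto dest: dominated_subspacesD)
  next
    case greater
    have "t * c \<le> t * (p (inverse t *\<^sub>R x + v) - inverse t * a)"
      using c_lo[OF scale] greater by (intro mult_left_mono) auto
    also have "\<dots> = p (x + t *\<^sub>R v) - a"
      using greater hom[of t "inverse t *\<^sub>R x + v"] by (simp add: algebra_simps)
    finally show ?thesis by simp
  qed
qed

lemma dominated_subspace_extend:
  assumes M: "M \<in> dominated_subspaces p" and p: "sublinear p" and v: "\<forall>a. (v, a) \<notin> M"
  shows "\<exists>M' \<in> dominated_subspaces p. M \<subset> M'"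
proof -
  have sM: "subspace M" using M by (rule dominated_subspacesD)
  obtain c where c_up: "\<And>y a. (y, a) \<in> M \<Longrightarrow> a - p (y - v) \<le> c"
    and c_lo: "\<And>x b. (x, b) \<in> M \<Longrightarrow> c \<le> p (x + v) - b"
    using dominated_subspace_extension_value[OF M p] by blast
  define M' where "M' = {m + n | m n. m \<in> M \<and> n \<in> span {(v, c)}}"
  have "0 + (v, c) \<in> M'"
    unfolding M'_def using subspace_0[OF sM] span_base[of "(v, c)" "{(v, c)}"] by blast
  then have new: "(v, c) \<in> M'" by simp
  have "subspace M'" unfolding M'_def by (rule subspace_sums[OF sM subspace_span])
  moreover have "M \<subseteq> M'"
  proof
    fix m assume "m \<in> M"
    then have "m + 0 \<in> M'" unfolding M'_def using span_zero[of "{(v, c)}"] by blast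
    then show "m \<in> M'" by simp
  qed
  moreover have "e \<le> p z" if "(z, e) \<in> M'" for z e
  proof -
    from that obtain x a t where "(x, a) \<in> M" "z = x + t *\<^sub>R v" "e = a + t * c"
      unfolding M'_def span_singleton by auto
    then show ?thesis using dominated_subspace_extension_dominated[OF M p _ c_up c_lo] by simp
  qed
  ultimately show ?thesis using v new unfolding dominated_subspaces_def by blast
qed

theorem hahn_banach_sublinear:
  fixes p :: "'a::real_vector \<Rightarrow> real"
  assumes p: "sublinear p"
  obtains L where "linear L" and "\<And>x. L x \<le> p x"
proof -
  obtain M where M: "M \<in> dominated_subspaces p"
    and maximal: "\<forall>X \<in> dominated_subspaces p. M \<subseteq> X \<longrightarrow> X = M"
    using Zorn_Lemma2[of "dominated_subspaces p"] dominated_subspaces_chain_bound[OF _ p] by blast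
  have total: "\<exists>a. (x, a) \<in> M" for x
    using dominated_subspace_extend[OF M p] maximal by blast
  define L where "L x = (THE a. (x, a) \<in> M)" for x
  have graph: "(x, L x) \<in> M" for x
    unfolding L_def using total dominated_subspace_single_valued[OF M p] by (metis theI)
  have sM: "subspace M" using M by (rule dominated_subspacesD)
  have "linear L"
  proof
    fix x y
    have "(x + y, L x + L y) \<in> M" using subspace_add[OF sM graph[of x] graph[of y]] by simp
    then show "L (x + y) = L x + L y"
      using graph dominated_subspace_single_valued[OF M p] by blast
  next
    fix c x
    have "(c *\<^sub>R x, c *\<^sub>R L x) \<in> M" using subspace_scale[OF sM graph[of x]] by simp
    then show "L (c *\<^sub>R x) = c *\<^sub>R L x"
      using graph dominated_subspace_single_valued[OF M p] by blast
  qed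
  moreover have "L x \<le> p x" for x using graph M by (auto dest: dominated_subspacesD)
  ultimately show thesis by (rule that)
qed

section \<open>Bounded linear minorants of convex functions\<close>

text \<open>For convex \<open>\<phi>\<close> with \<open>\<phi> 0 = 0\<close> the quotients \<open>\<phi> (t *\<^sub>R d) / t\<close> increase with \<open>t\<close>,
  so this is the one-sided directional derivative of \<open>\<phi>\<close> at 0.\<close>

definition radial_derivative :: "('a::real_vector \<Rightarrow> real) \<Rightarrow> 'a \<Rightarrow> real" where
  "radial_derivative \<phi> d = Inf ((\<lambda>t. \<phi> (t *\<^sub>R d) / t) ` {0<..})"

context
  fixes \<phi> :: "'a::real_normed_vector \<Rightarrow> real" and b :: real
  assumes convex: "convex_on UNIV \<phi>" and bound: "\<And>d. \<bar>\<phi> d\<bar> \<le> b * norm d"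
begin

lemma radial_derivative_le:
  assumes "0 < t"
  shows "radial_derivative \<phi> d \<le> \<phi> (t *\<^sub>R d) / t"
proof -
  have "- b * norm d \<le> \<phi> (s *\<^sub>R d) / s" if "0 < s" for s
    using bound[of "s *\<^sub>R d"] that by (simp add: field_simps abs_le_iff)
  then have "bdd_below ((\<lambda>t. \<phi> (t *\<^sub>R d) / t) ` {0<..})" by (intro bdd_belowI[of _ "- b * norm d"]) auto
  then show ?thesis unfolding radial_derivative_def using assms by (auto intro!: cInf_lower)
qed

lemma radial_derivative_greatest:
  assumes "\<And>t. 0 < t \<Longrightarrow> c \<le> \<phi> (t *\<^sub>R d) / t"
  shows "c \<le> radial_derivative \<phi> d"
  unfolding radial_derivative_def by (rule cInf_greatest) (use assms in auto)

lemma radial_derivative_le_self: "radial_derivative \<phi> d \<le> \<phi> d"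
  using radial_derivative_le[of 1 d] by simp

lemma radial_derivative_scaleR:
  assumes "0 < t"
  shows "radial_derivative \<phi> (t *\<^sub>R x) = t * radial_derivative \<phi> x"
proof (rule antisym)
  have "radial_derivative \<phi> (t *\<^sub>R x) / t \<le> \<phi> (r *\<^sub>R x) / r" if "0 < r" for r
    using radial_derivative_le[of "r / t" "t *\<^sub>R x"] that assms by (simp add: field_simps)
  then have "radial_derivative \<phi> (t *\<^sub>R x) / t \<le> radial_derivative \<phi> x"
    by (rule radial_derivative_greatest)
  then show "radial_derivative \<phi> (t *\<^sub>R x) \<le> t * radial_derivative \<phi> x"
    using assms by (simp add: field_simps)
  have "t * radial_derivative \<phi> x \<le> \<phi> (s *\<^sub>R (t *\<^sub>R x)) / s" if "0 < s" for s
    using radial_derivative_le[of "s * t" x] that assms by (simp add: field_simps)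
  then show "t * radial_derivative \<phi> x \<le> radial_derivative \<phi> (t *\<^sub>R x)"
    by (rule radial_derivative_greatest)
qed

lemma sublinear_radial_derivative:
  assumes zero: "\<phi> 0 = 0"
  shows "sublinear (radial_derivative \<phi>)"
proof -
  have "radial_derivative \<phi> 0 = 0"
    using radial_derivative_le_self[of 0] radial_derivative_greatest[of 0 0] zero by simp
  then have hom: "radial_derivative \<phi> (t *\<^sub>R x) = t * radial_derivative \<phi> x" if "0 \<le> t" for t x
    using radial_derivative_scaleR that by (cases "t = 0") auto
  have quotients: "radial_derivative \<phi> (x + y) \<le> \<phi> (t1 *\<^sub>R x) / t1 + \<phi> (t2 *\<^sub>R y) / t2"
    if t1: "0 < t1" and t2: "0 < t2" for x y t1 t2
  proof -
    define s where "s = t1 * t2 / (t1 + t2)"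
    define l where "l = t1 / (t1 + t2)"
    have s: "0 < s" and l: "0 \<le> l" "l \<le> 1" using t1 t2 by (auto simp: s_def l_def)
    have weights: "1 - l = s / t1" "l = s / t2"
      using t1 t2 by (simp_all add: s_def l_def divide_simps)
    have "s *\<^sub>R (x + y) = (1 - l) *\<^sub>R (t1 *\<^sub>R x) + l *\<^sub>R (t2 *\<^sub>R y)"
      using t1 t2 by (simp add: s_def l_def field_simps scaleR_add_right)
    then have "\<phi> (s *\<^sub>R (x + y)) \<le> (1 - l) * \<phi> (t1 *\<^sub>R x) + l * \<phi> (t2 *\<^sub>R y)"
      using convex_onD[OF convex l, of "t1 *\<^sub>R x" "t2 *\<^sub>R y"] by simp
    also have "\<dots> = s * (\<phi> (t1 *\<^sub>R x) / t1 + \<phi> (t2 *\<^sub>R y) / t2)"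
      unfolding weights(1) unfolding weights(2) by (simp add: algebra_simps)
    finally have "\<phi> (s *\<^sub>R (x + y)) / s \<le> \<phi> (t1 *\<^sub>R x) / t1 + \<phi> (t2 *\<^sub>R y) / t2"
      using s by (simp add: pos_divide_le_eq mult.commute)
    then show ?thesis using radial_derivative_le[OF s, of "x + y"] by linarith
  qed
  have "radial_derivative \<phi> (x + y) - radial_derivative \<phi> y \<le> radial_derivative \<phi> x" for x y
  proof (rule radial_derivative_greatest)
    fix t1 :: real assume "0 < t1"
    then have "radial_derivative \<phi> (x + y) - \<phi> (t1 *\<^sub>R x) / t1 \<le> radial_derivative \<phi> y"
      using quotients[of t1 _ x y] by (intro radial_derivative_greatest) (simp add: algebra_simps)
    then show "radial_derivative \<phi> (x + y) - radial_derivative \<phi> y \<le> \<phi> (t1 *\<^sub>R x) / t1"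
      by linarith
  qed
  then show ?thesis unfolding sublinear_def using hom by (auto simp: algebra_simps)
qed

lemma convex_bounded_blinfun_minorant:
  assumes "\<phi> 0 = 0" and "0 \<le> b"
  obtains L :: "'a \<Rightarrow>\<^sub>L real" where "norm L \<le> b" and "\<And>d. L d \<le> \<phi> d"
proof -
  obtain L where L: "linear L" "\<And>x. L x \<le> radial_derivative \<phi> x"
    using hahn_banach_sublinear[OF sublinear_radial_derivative[OF assms(1)]] by blast
  have upper: "L d \<le> \<phi> d" for d using L(2) radial_derivative_le_self order_trans by blast
  have bound_L: "\<bar>L d\<bar> \<le> b * norm d" for d
    using upper[of d] upper[of "-d"] bound[of d] bound[of "-d"] linear_neg[OF L(1), of d]
    by (simp add: abs_le_iff)
  then have bl: "bounded_linear L"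
    using L(1) by (intro bounded_linear_intro[where K = b]) (auto simp: linear_add linear_scale mult.commute)
  have "norm (Blinfun L) \<le> b"
    using bound_L assms(2) by (intro norm_blinfun_bound) (auto simp: bounded_linear_Blinfun_apply[OF bl])
  then show thesis using upper by (intro that[of "Blinfun L"]) (auto simp: bounded_linear_Blinfun_apply[OF bl])
qed

end

lemma exists_norming_functional:
  fixes v :: "'a::real_normed_vector"
  obtains L :: "'a \<Rightarrow>\<^sub>L real" where "norm L \<le> 1" and "L v = norm v"
proof -
  define \<phi> where "\<phi> d = norm (v + d) - norm v" for d
  have "convex_on UNIV (\<lambda>d. norm (v + d))"
    using convex_on_dist[OF convex_UNIV, of "-v"] by (simp add: dist_norm norm_minus_commute add.commute)
  then have "convex_on UNIV \<phi>"
    unfolding \<phi>_def by (rule convex_on_diff) (simp add: concave_on_def convex_on_const)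
  moreover have "\<bar>\<phi> d\<bar> \<le> 1 * norm d" for d
    unfolding \<phi>_def using norm_triangle_ineq3[of "v + d" v] by simp
  ultimately obtain L :: "'a \<Rightarrow>\<^sub>L real" where L: "norm L \<le> 1" "\<And>d. L d \<le> \<phi> d"
    using convex_bounded_blinfun_minorant[of \<phi> 1] by (auto simp: \<phi>_def)
  have "norm v \<le> L v" using L(2)[of "-v"] by (simp add: \<phi>_def blinfun.minus_right)
  moreover have "L v \<le> norm v"
    using norm_blinfun[of L v] L(1) mult_left_le_one_le[of "norm v" "norm L"] by simp
  ultimately show thesis using L(1) by (intro that) auto
qed

section \<open>Subgradients of convex functions with a linear minorant\<close>

lemma convex_efunD_finite:
  assumes "convex_efun g" "g u = ereal a" "g v = ereal c" "0 < t" "t < 1"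
  shows "g (t *\<^sub>R u + (1 - t) *\<^sub>R v) \<le> ereal (t * a + (1 - t) * c)"
  using assms unfolding convex_efun_def by (metis times_ereal.simps(1) plus_ereal.simps(1))

text \<open>The inf-convolution of \<open>f\<close> with \<open>b * norm\<close>: the largest \<open>b\<close>-Lipschitz minorant of \<open>f\<close>.
  When \<open>f\<close> is convex and \<open>f u \<ge> - b * norm (u - xb)\<close> it is a finite convex function squeezed
  between \<open>\<plusminus>b * norm (. - xb)\<close>, so a linear minorant of it is a subgradient of \<open>f\<close> at \<open>xb\<close>.\<close>

definition pasch_hausdorff :: "('a::real_normed_vector \<Rightarrow> ereal) \<Rightarrow> real \<Rightarrow> 'a \<Rightarrow> real" where
  "pasch_hausdorff f b x = Inf ((\<lambda>y. real_of_ereal (f y) + b * norm (x - y)) ` {y. f y \<noteq> \<infinity>})"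

context
  fixes f :: "'a::real_normed_vector \<Rightarrow> ereal" and b :: real and xb :: 'a
  assumes convex: "convex_efun f" and not_minf: "\<And>x. f x \<noteq> -\<infinity>" and b: "0 \<le> b"
    and zero: "f xb = 0" and minorant: "\<And>u. ereal (- b * norm (u - xb)) \<le> f u"
begin

lemma pasch_hausdorff_le:
  assumes "f y = ereal r"
  shows "pasch_hausdorff f b x \<le> r + b * norm (x - y)"
proof -
  have "- b * norm (x - xb) \<le> real_of_ereal (f z) + b * norm (x - z)" if "f z \<noteq> \<infinity>" for z
  proof -
    have "norm (z - xb) \<le> norm (x - xb) + norm (x - z)"
      using norm_triangle_ineq4[of "x - xb" "x - z"] by simp
    then have "b * norm (z - xb) \<le> b * norm (x - xb) + b * norm (x - z)"
      using mult_left_mono[OF _ b] by (simp add: distrib_left [symmetric])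
    then have "- b * norm (x - xb) \<le> - b * norm (z - xb) + b * norm (x - z)" by simp
    also have "- b * norm (z - xb) \<le> real_of_ereal (f z)"
      using minorant[of z] that not_minf[of z] by (cases "f z") auto
    finally show ?thesis by simp
  qed
  then have "bdd_below ((\<lambda>z. real_of_ereal (f z) + b * norm (x - z)) ` {z. f z \<noteq> \<infinity>})"
    by (intro bdd_belowI[of _ "- b * norm (x - xb)"]) auto
  moreover have "r + b * norm (x - y) \<in> (\<lambda>z. real_of_ereal (f z) + b * norm (x - z)) ` {z. f z \<noteq> \<infinity>}"
    using assms by (auto intro!: image_eqI[of _ _ y])
  ultimately show ?thesis unfolding pasch_hausdorff_def by (simp add: cInf_lower)
qed

lemma pasch_hausdorff_greatest:
  assumes "\<And>y r. f y = ereal r \<Longrightarrow> c \<le> r + b * norm (x - y)"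
  shows "c \<le> pasch_hausdorff f b x"
  unfolding pasch_hausdorff_def
proof (rule cInf_greatest)
  have "xb \<in> {y. f y \<noteq> \<infinity>}" using zero by simp
  then show "(\<lambda>y. real_of_ereal (f y) + b * norm (x - y)) ` {y. f y \<noteq> \<infinity>} \<noteq> {}" by blast
next
  fix z assume "z \<in> (\<lambda>y. real_of_ereal (f y) + b * norm (x - y)) ` {y. f y \<noteq> \<infinity>}"
  then obtain y where "f y \<noteq> \<infinity>" "z = real_of_ereal (f y) + b * norm (x - y)" by blast
  then show "c \<le> z" using assms not_minf[of y] by (cases "f y") auto
qed

lemma pasch_hausdorff_bound: "\<bar>pasch_hausdorff f b x\<bar> \<le> b * norm (x - xb)"
proof -
  have "pasch_hausdorff f b x \<le> b * norm (x - xb)"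
    using pasch_hausdorff_le[of xb 0] zero by (simp add: zero_ereal_def)
  moreover have "- b * norm (x - xb) \<le> pasch_hausdorff f b x"
  proof (rule pasch_hausdorff_greatest)
    fix y r assume "f y = ereal r"
    then have "- b * norm (y - xb) \<le> r" using minorant[of y] by simp
    moreover have "norm (y - xb) \<le> norm (x - xb) + norm (x - y)"
      using norm_triangle_ineq4[of "x - xb" "x - y"] by simp
    then have "b * norm (y - xb) \<le> b * norm (x - xb) + b * norm (x - y)"
      using mult_left_mono[OF _ b] by (simp add: distrib_left [symmetric])
    ultimately show "- b * norm (x - xb) \<le> r + b * norm (x - y)" by simp
  qed
  ultimately show ?thesis by simp
qed

lemma convex_pasch_hausdorff: "convex_on UNIV (pasch_hausdorff f b)"
proof (rule convex_onI)
  fix t :: real and x y :: 'a assume t: "0 < t" "t < 1"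
  let ?z = "(1 - t) *\<^sub>R x + t *\<^sub>R y"
  have combine: "pasch_hausdorff f b ?z \<le> (1 - t) * (r1 + b * norm (x - y1)) + t * (r2 + b * norm (y - y2))"
    if y1: "f y1 = ereal r1" and y2: "f y2 = ereal r2" for y1 y2 r1 r2
  proof -
    let ?w = "(1 - t) *\<^sub>R y1 + t *\<^sub>R y2"
    have "f ?w \<le> ereal ((1 - t) * r1 + t * r2)"
      using convex_efunD_finite[OF convex y1 y2, of "1 - t"] t by simp
    then obtain r where r: "f ?w = ereal r" "r \<le> (1 - t) * r1 + t * r2"
      using not_minf[of ?w] by (cases "f ?w") auto
    have "?z - ?w = (1 - t) *\<^sub>R (x - y1) + t *\<^sub>R (y - y2)" by (simp add: algebra_simps)
    then have "norm (?z - ?w) \<le> (1 - t) * norm (x - y1) + t * norm (y - y2)"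
      using norm_triangle_ineq[of "(1 - t) *\<^sub>R (x - y1)" "t *\<^sub>R (y - y2)"] t by simp
    then have "b * norm (?z - ?w) \<le> b * ((1 - t) * norm (x - y1) + t * norm (y - y2))"
      by (rule mult_left_mono[OF _ b])
    then show ?thesis using pasch_hausdorff_le[OF r(1), of ?z] r(2) by (simp add: algebra_simps)
  qed
  have "(pasch_hausdorff f b ?z - (1 - t) * pasch_hausdorff f b x) / t \<le> pasch_hausdorff f b y"
  proof (rule pasch_hausdorff_greatest)
    fix y2 r2 assume y2: "f y2 = ereal r2"
    have "(pasch_hausdorff f b ?z - t * (r2 + b * norm (y - y2))) / (1 - t) \<le> pasch_hausdorff f b x"
    proof (rule pasch_hausdorff_greatest)
      fix y1 r1 assume y1: "f y1 = ereal r1"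
      have "0 < 1 - t" using t by simp
      then show "(pasch_hausdorff f b ?z - t * (r2 + b * norm (y - y2))) / (1 - t) \<le> r1 + b * norm (x - y1)"
        using combine[OF y1 y2] by (simp add: pos_divide_le_eq algebra_simps)
    qed
    then show "(pasch_hausdorff f b ?z - (1 - t) * pasch_hausdorff f b x) / t \<le> r2 + b * norm (y - y2)"
      using t by (simp add: divide_le_eq le_divide_eq mult.commute)
  qed
  then show "pasch_hausdorff f b ?z \<le> (1 - t) * pasch_hausdorff f b x + t * pasch_hausdorff f b y"
    using t by (simp add: divide_le_eq mult.commute)
qed simp

lemma subdiff_exists_norm_le: "\<exists>L \<in> subdiff f xb. norm L \<le> b"
proof -
  define \<phi> where "\<phi> d = pasch_hausdorff f b (xb + d)" for d
  have convex_\<phi>: "convex_on UNIV \<phi>"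
  proof (rule convex_onI)
    fix t :: real and x y assume "0 < t" "t < 1"
    moreover have "xb + ((1 - t) *\<^sub>R x + t *\<^sub>R y) = (1 - t) *\<^sub>R (xb + x) + t *\<^sub>R (xb + y)"
      by (simp add: algebra_simps)
    ultimately show "\<phi> ((1 - t) *\<^sub>R x + t *\<^sub>R y) \<le> (1 - t) * \<phi> x + t * \<phi> y"
      unfolding \<phi>_def using convex_onD[OF convex_pasch_hausdorff, of t "xb + x" "xb + y"] by simp
  qed simp
  have bound_\<phi>: "\<bar>\<phi> d\<bar> \<le> b * norm d" for d
    using pasch_hausdorff_bound[of "xb + d"] by (simp add: \<phi>_def)
  have "\<phi> 0 = 0" using bound_\<phi>[of 0] by simp
  then obtain L :: "'a \<Rightarrow>\<^sub>L real" where L: "norm L \<le> b" "\<And>d. L d \<le> \<phi> d"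
    using convex_bounded_blinfun_minorant[OF convex_\<phi> bound_\<phi> _ b] by blast
  have "ereal (L (u - xb)) \<le> f u - f xb" for u
  proof (cases "f u")
    case (real r)
    then show ?thesis
      using L(2)[of "u - xb"] pasch_hausdorff_le[OF real, of u] zero by (simp add: \<phi>_def)
  qed (use zero not_minf in auto)
  then show ?thesis using L(1) by (auto simp: subdiff_def)
qed

end

section \<open>Error bound moduli and perturbations\<close>

lemma ereal_le_divide_nonneg:
  assumes "0 < a" "0 \<le> d" "0 \<le> c" "ereal (c * d) \<le> a"
  shows "ereal c \<le> a / ereal d"
proof (cases "d = 0")
  case True
  then show ?thesis using assms by (simp add: divide_ereal_def)
next
  case False
  with assms have "ereal d * ereal c \<le> a" "0 < d" by (simp_all add: mult.commute)
  then show ?thesis by (simp add: ereal_le_divide_pos)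
qed

lemma absdiff_lessD:
  assumes "absdiff a b < ereal r"
  shows "a \<le> b + ereal r" and "b \<le> a + ereal r"
proof -
  have "(a \<le> b + ereal r) \<and> (b \<le> a + ereal r)"
  proof (cases "a = b")
    case True
    then show ?thesis using assms by (cases a) (auto simp: absdiff_def)
  next
    case False
    then show ?thesis using assms by (cases a; cases b) (auto simp: absdiff_def)
  qed
  then show "a \<le> b + ereal r" and "b \<le> a + ereal r" by auto
qed

lemma Liminf_at_within_leI:
  fixes X :: "'a::metric_space \<Rightarrow> ereal"
  assumes "\<And>r. r > 0 \<Longrightarrow> \<exists>x \<in> S. x \<noteq> a \<and> dist x a < r \<and> X x \<le> C"
  shows "Liminf (at a within S) X \<le> C"
  unfolding Liminf_def
proof (rule SUP_least)
  fix P assume "P \<in> {P. eventually P (at a within S)}"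
  then obtain d where d: "d > 0" "\<forall>x \<in> S. x \<noteq> a \<and> dist x a < d \<longrightarrow> P x"
    by (auto simp: eventually_at)
  then obtain x where "x \<in> S" "x \<noteq> a" "dist x a < d" "X x \<le> C" using assms by blast
  then show "Inf (X ` Collect P) \<le> C" using d by (intro INF_lower2[of x]) auto
qed

lemma Liminf_at_within_geI:
  fixes X :: "'a::metric_space \<Rightarrow> ereal"
  assumes "r > 0" "\<And>x. x \<in> S \<Longrightarrow> x \<noteq> a \<Longrightarrow> dist x a < r \<Longrightarrow> C \<le> X x"
  shows "C \<le> Liminf (at a within S) X"
  by (rule Liminf_bounded) (use assms in \<open>auto simp: eventually_at\<close>)

lemma Er_nonneg: "0 \<le> Er g xb"
  unfolding Er_def
  by (rule Liminf_bounded, unfold eventually_at_filter)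
     (auto intro!: always_eventually simp: edist_set_def infdist_nonneg)

lemma edist_set_sublevel0:
  assumes "g xb \<le> 0"
  shows "edist_set x (sublevel0 g) = ereal (infdist x (sublevel0 g))"
  using assms by (auto simp: edist_set_def sublevel0_def)

lemma Ptb_local_bounds:
  fixes f g :: "'a::real_normed_vector \<Rightarrow> ereal"
  assumes "g \<in> Ptb f xb \<epsilon>" "\<epsilon> < e"
  obtains \<rho> where "\<rho> > 0"
    and "\<And>x. x \<noteq> xb \<Longrightarrow> dist x xb < \<rho> \<Longrightarrow> g x \<le> f x + ereal (e * norm (x - xb))"
    and "\<And>x. x \<noteq> xb \<Longrightarrow> dist x xb < \<rho> \<Longrightarrow> f x \<le> g x + ereal (e * norm (x - xb))"
proof -
  have "Limsup (at xb) (\<lambda>x. absdiff (g x) (f x) / ereal (norm (x - xb))) < ereal e"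
    using assms by (auto simp: Ptb_def intro: le_less_trans)
  from Limsup_lessD[OF this] obtain \<rho> where \<rho>: "\<rho> > 0"
    "\<And>x. x \<noteq> xb \<Longrightarrow> dist x xb < \<rho> \<Longrightarrow> absdiff (g x) (f x) / ereal (norm (x - xb)) < ereal e"
    by (auto simp: eventually_at)
  have "absdiff (g x) (f x) < ereal (e * norm (x - xb))" if "x \<noteq> xb" "dist x xb < \<rho>" for x
  proof -
    have "0 < norm (x - xb)" using that by simp
    then show ?thesis using \<rho>(2)[OF that]
      by (cases "absdiff (g x) (f x)") (simp_all add: divide_less_eq)
  qed
  then show thesis using \<rho>(1) absdiff_lessD by (intro that) auto
qed

lemma closed_subdiff: "closed (subdiff f x)"
proof -
  have "closed {L :: 'a \<Rightarrow>\<^sub>L real. ereal (L (u - x)) \<le> f u - f x}" for u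
  proof -
    have "continuous_on UNIV (\<lambda>L :: 'a \<Rightarrow>\<^sub>L real. ereal (L (u - x)))"
      by (intro continuous_on_ereal continuous_intros)
    then show ?thesis by (intro closed_Collect_le) (auto intro: continuous_on_const)
  qed
  moreover have "subdiff f x = (\<Inter>u. {L :: 'a \<Rightarrow>\<^sub>L real. ereal (L (u - x)) \<le> f u - f x})"
    unfolding subdiff_def by auto
  ultimately show ?thesis by auto
qed

lemma Gamma0_blinfun_affine:
  fixes L :: "'a::real_normed_vector \<Rightarrow>\<^sub>L real"
  shows "Gamma0 (\<lambda>u. ereal (L (u - xb)))"
  unfolding Gamma0_def proper_fun_def convex_efun_def lsc_efun_def
proof (intro conjI allI impI)
  fix x y and t :: real
  have "t *\<^sub>R x + (1 - t) *\<^sub>R y - xb = t *\<^sub>R (x - xb) + (1 - t) *\<^sub>R (y - xb)"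
    by (simp add: algebra_simps)
  then show "ereal (L (t *\<^sub>R x + (1 - t) *\<^sub>R y - xb))
      \<le> ereal t * ereal (L (x - xb)) + ereal (1 - t) * ereal (L (y - xb))"
    by (simp add: blinfun.add_right blinfun.scaleR_right)
next
  fix c :: ereal
  have "continuous_on UNIV (\<lambda>u. ereal (L (u - xb)))"
    by (intro continuous_on_ereal continuous_intros)
  then show "closed {x. ereal (L (x - xb)) \<le> c}"
    by (intro closed_Collect_le) (auto intro: continuous_on_const)
qed auto

lemma lsc_efun_open_superlevel: "lsc_efun f \<Longrightarrow> open {x. a < f x}"
proof -
  assume "lsc_efun f"
  moreover have "{x. a < f x} = - {x. f x \<le> a}" by auto
  ultimately show ?thesis by (simp add: lsc_efun_def open_Compl)
qed

lemma ereal_less_add_split: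
  fixes c u v :: ereal
  assumes "c < u + v" "u \<noteq> -\<infinity>" "v \<noteq> -\<infinity>"
  shows "\<exists>a b :: real. ereal a < u \<and> ereal b < v \<and> c \<le> ereal a + ereal b"
proof -
  have below: "\<exists>a. ereal a < z" if "z \<noteq> -\<infinity>" for z :: ereal
    using that by (cases z) (auto intro: lt_ex)
  show ?thesis
  proof (cases c)
    case (real r)
    show ?thesis
    proof (cases u)
      case (real p)
      show ?thesis
      proof (cases v)
        case (real q)
        with \<open>u = ereal p\<close> \<open>c = ereal r\<close> assms(1) have "r < p + q" by simp
        then show ?thesis using \<open>u = ereal p\<close> \<open>v = ereal q\<close> \<open>c = ereal r\<close>
          by (intro exI[of _ "p - (p + q - r) / 2"] exI[of _ "q - (p + q - r) / 2"]) simp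
      next
        case PInf
        then show ?thesis using \<open>u = ereal p\<close> \<open>c = ereal r\<close>
          by (intro exI[of _ "p - 1"] exI[of _ "r - p + 1"]) simp
      qed (use assms in simp)
    next
      case PInf
      obtain b where "ereal b < v" using below assms(3) by blast
      then show ?thesis using PInf \<open>c = ereal r\<close> by (intro exI[of _ "r - b"] exI[of _ b]) simp
    qed (use assms in simp)
  qed (use assms below in auto)
qed

lemma convex_efun_add:
  assumes f: "convex_efun f" and h: "convex_efun h"
    and not_minf: "\<And>x. f x \<noteq> -\<infinity>" "\<And>x. h x \<noteq> -\<infinity>"
  shows "convex_efun (\<lambda>u. f u + h u)"
  unfolding convex_efun_def
proof (intro allI impI)
  fix x y and t :: real assume t: "0 < t \<and> t < 1"
  have distrib: "ereal s * (a + b) = ereal s * a + ereal s * b" if "0 \<le> s" "a \<noteq> -\<infinity>" "b \<noteq> -\<infinity>"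
    for s a b
    using that by (cases a; cases b) (auto simp: distrib_left)
  have "f (t *\<^sub>R x + (1 - t) *\<^sub>R y) + h (t *\<^sub>R x + (1 - t) *\<^sub>R y)
      \<le> (ereal t * f x + ereal (1 - t) * f y) + (ereal t * h x + ereal (1 - t) * h y)"
    using f h t unfolding convex_efun_def by (intro add_mono) auto
  also have "\<dots> = ereal t * (f x + h x) + ereal (1 - t) * (f y + h y)"
    using t not_minf by (simp add: distrib ac_simps)
  finally show "f (t *\<^sub>R x + (1 - t) *\<^sub>R y) + h (t *\<^sub>R x + (1 - t) *\<^sub>R y)
      \<le> ereal t * (f x + h x) + ereal (1 - t) * (f y + h y)" .
qed

lemma lsc_efun_add:
  assumes f: "lsc_efun f" and h: "lsc_efun h"
    and not_minf: "\<And>x. f x \<noteq> -\<infinity>" "\<And>x. h x \<noteq> -\<infinity>"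
  shows "lsc_efun (\<lambda>u. f u + h u)"
  unfolding lsc_efun_def
proof
  fix c :: ereal
  define U where "U = (\<lambda>(a, b). {x. ereal a < f x} \<inter> {x. ereal b < h x}) ` {(a, b). c \<le> ereal a + ereal b}"
  have "open (\<Union>U)"
    unfolding U_def using lsc_efun_open_superlevel[OF f] lsc_efun_open_superlevel[OF h]
    by (intro open_Union) auto
  moreover have "\<Union>U = {x. c < f x + h x}"
  proof (rule set_eqI, rule iffI)
    fix y assume "y \<in> \<Union>U"
    then obtain a b where ab: "c \<le> ereal a + ereal b" "ereal a < f y" "ereal b < h y"
      unfolding U_def by auto
    then have "ereal a + ereal b < f y + h y"
      using not_minf[of y] by (cases "f y"; cases "h y") auto
    then show "y \<in> {x. c < f x + h x}" using ab(1) by (simp add: order.strict_trans1)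
  next
    fix x assume "x \<in> {x. c < f x + h x}"
    then obtain a b :: real where "ereal a < f x" "ereal b < h x" "c \<le> ereal a + ereal b"
      using ereal_less_add_split not_minf by blast
    then show "x \<in> \<Union>U" unfolding U_def by blast
  qed
  moreover have "{x. f x + h x \<le> c} = - {x. c < f x + h x}" by auto
  ultimately show "closed {x. f x + h x \<le> c}" by (simp add: closed_def)
qed

lemma Gamma0_add:
  assumes f: "Gamma0 f" and h: "Gamma0 h" and "f x0 \<noteq> \<infinity>" "h x0 \<noteq> \<infinity>"
  shows "Gamma0 (\<lambda>u. f u + h u)"
proof -
  have not_minf: "\<And>x. f x \<noteq> -\<infinity>" "\<And>x. h x \<noteq> -\<infinity>"
    using f h by (auto simp: Gamma0_def proper_fun_def)
  then have "proper_fun (\<lambda>u. f u + h u)"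
    unfolding proper_fun_def using assms(3,4) by (auto intro!: exI[of _ x0])
  moreover have "convex_efun (\<lambda>u. f u + h u)"
    using f h by (intro convex_efun_add not_minf) (simp_all add: Gamma0_def)
  moreover have "lsc_efun (\<lambda>u. f u + h u)"
    using f h by (intro lsc_efun_add not_minf) (simp_all add: Gamma0_def)
  ultimately show ?thesis by (simp add: Gamma0_def)
qed

lemma Ptb_l_subset_Ptb_c:
  assumes not_minf: "\<And>x. f x \<noteq> -\<infinity>"
  shows "Ptb_l f xb \<epsilon> \<subseteq> Ptb_c f xb \<epsilon>"
proof
  fix g assume "g \<in> Ptb_l f xb \<epsilon>"
  then obtain L :: "'a \<Rightarrow>\<^sub>L real" where L: "norm L \<le> \<epsilon>" "\<And>u. g u = f u + ereal (L (u - xb))"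
    unfolding Ptb_l_def by blast
  have e0: "0 \<le> \<epsilon>" using L(1) norm_ge_zero order_trans by blast
  have "absdiff (g x) (f x) / ereal (norm (x - xb)) \<le> ereal \<epsilon>" if "x \<noteq> xb" for x
  proof -
    have "\<bar>L (x - xb)\<bar> \<le> norm L * norm (x - xb)" using norm_blinfun[of L "x - xb"] by simp
    also have "\<dots> \<le> \<epsilon> * norm (x - xb)" using L(1) by (rule mult_right_mono) simp
    finally have "\<bar>L (x - xb)\<bar> \<le> \<epsilon> * norm (x - xb)" .
    then have "absdiff (g x) (f x) \<le> ereal (norm (x - xb)) * ereal \<epsilon>"
      using L(2)[of x] e0 not_minf[of x] by (cases "f x") (auto simp: absdiff_def mult.commute)
    then show ?thesis using that by (simp add: ereal_divide_le_pos)
  qed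
  then have "Limsup (at xb) (\<lambda>x. absdiff (g x) (f x) / ereal (norm (x - xb))) \<le> ereal \<epsilon>"
    by (intro Limsup_bounded) (auto simp: eventually_at_filter)
  moreover have "g xb = f xb" using L(2)[of xb] by simp
  ultimately show "g \<in> Ptb_c f xb \<epsilon>"
    unfolding Ptb_c_def Ptb_def using Gamma0_blinfun_affine L(2) by blast
qed

lemma Ptb_c_subset_Gamma0_Ptb:
  assumes f: "Gamma0 f" and zero: "f xb = 0"
  shows "Ptb_c f xb \<epsilon> \<subseteq> {g. Gamma0 g} \<inter> Ptb f xb \<epsilon>"
proof
  fix g assume "g \<in> Ptb_c f xb \<epsilon>"
  then obtain h where h: "Gamma0 h" "\<And>u. g u = f u + h u" and g: "g \<in> Ptb f xb \<epsilon>"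
    unfolding Ptb_c_def by blast
  then have "h xb = 0" using zero by (simp add: Ptb_def)
  then have "Gamma0 (\<lambda>u. f u + h u)" using Gamma0_add[OF f h(1), of xb] zero by simp
  moreover have "g = (\<lambda>u. f u + h u)" using h(2) by auto
  ultimately show "g \<in> {g. Gamma0 g} \<inter> Ptb f xb \<epsilon>" using g by simp
qed

lemma Er_Ptb_le_Er_Ptb_c: "Gamma0 f \<Longrightarrow> f xb = 0 \<Longrightarrow> Er_Ptb f xb \<epsilon> \<le> Er_Ptb_c f xb \<epsilon>"
  unfolding Er_Ptb_def Er_Ptb_c_def by (rule INF_superset_mono[OF Ptb_c_subset_Gamma0_Ptb]) simp_all

lemma Er_Ptb_c_le_Er_Ptb_l: "Gamma0 f \<Longrightarrow> Er_Ptb_c f xb \<epsilon> \<le> Er_Ptb_l f xb \<epsilon>"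
  unfolding Er_Ptb_c_def Er_Ptb_l_def
  by (rule INF_superset_mono[OF Ptb_l_subset_Ptb_c]) (simp_all add: Gamma0_def proper_fun_def)

lemma Er_Ptb_nonneg: "0 \<le> Er_Ptb f xb \<epsilon>"
  and Er_Ptb_c_nonneg: "0 \<le> Er_Ptb_c f xb \<epsilon>"
  and Er_Ptb_l_nonneg: "0 \<le> Er_Ptb_l f xb \<epsilon>"
  unfolding Er_Ptb_def Er_Ptb_c_def Er_Ptb_l_def by (simp_all add: Er_nonneg INF_greatest)

lemma Inf_zero_level_mono:
  fixes F G :: "real \<Rightarrow> ereal"
  assumes "\<And>\<epsilon>. 0 \<le> F \<epsilon>" and "\<And>\<epsilon>. F \<epsilon> \<le> G \<epsilon>"
  shows "Inf {ereal \<epsilon> | \<epsilon>. \<epsilon> > 0 \<and> F \<epsilon> = 0} \<le> Inf {ereal \<epsilon> | \<epsilon>. \<epsilon> > 0 \<and> G \<epsilon> = 0}"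
proof (rule Inf_superset_mono, safe)
  fix \<epsilon> :: real assume "\<epsilon> > 0" "G \<epsilon> = 0"
  then have "F \<epsilon> = 0" using assms[of \<epsilon>] by (simp add: antisym)
  with \<open>\<epsilon> > 0\<close> show "\<exists>\<epsilon>'. ereal \<epsilon> = ereal \<epsilon>' \<and> \<epsilon>' > 0 \<and> F \<epsilon>' = 0" by blast
qed

section \<open>Boundary subgradients give perturbations without error bound\<close>

lemma infdist_ge_halfspace:
  fixes w :: "'a::real_normed_vector \<Rightarrow>\<^sub>L real"
  assumes "xb \<in> S" and "\<And>v. v \<in> S \<Longrightarrow> w (v - xb) \<le> 0"
  shows "w (x - xb) / norm w \<le> infdist x S"
  unfolding infdist_notempty[OF ex_in_conv[THEN iffD1, OF exI, OF assms(1)]]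
proof (rule cINF_greatest)
  fix v assume "v \<in> S"
  then have "w (x - xb) \<le> w (x - xb) - w (v - xb)" using assms(2) by simp
  also have "\<dots> = w (x - v)" by (simp add: blinfun.diff_right)
  also have "\<dots> \<le> norm w * dist x v" using norm_blinfun[of w "x - v"] by (simp add: dist_norm)
  finally show "w (x - xb) / norm w \<le> dist x v"
    by (cases "w = 0") (simp_all add: divide_le_eq mult.commute)
qed (use assms(1) in blast)

lemma Er_le_of_linear_minorant:
  fixes g :: "'a::real_normed_vector \<Rightarrow> ereal" and w :: "'a \<Rightarrow>\<^sub>L real"
  assumes convex: "convex_efun g" and zero: "g xb = 0"
    and minorant: "\<And>v. ereal (w (v - xb)) \<le> g v"
    and u: "g u = ereal a" and pos: "0 < w (u - xb)"
  shows "Er g xb \<le> ereal (a * norm w / w (u - xb))"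
  unfolding Er_def
proof (rule Liminf_at_within_leI)
  fix r :: real assume "r > 0"
  define e where "e = u - xb"
  have we: "0 < w e" using pos by (simp add: e_def)
  then have "0 < norm e" by (auto simp: blinfun.zero_right)
  define t where "t = r / (r + norm e)"
  have d: "0 < r + norm e" using \<open>r > 0\<close> \<open>0 < norm e\<close> by (rule add_pos_pos)
  have "r * norm e < r * (r + norm e)" using \<open>r > 0\<close> by simp
  then have t: "0 < t" "t < 1" "t * norm e < r"
    using \<open>r > 0\<close> \<open>0 < norm e\<close> d by (simp_all add: t_def divide_less_eq mult.commute)
  define x where "x = xb + t *\<^sub>R e"
  have "x = t *\<^sub>R u + (1 - t) *\<^sub>R xb" by (simp add: x_def e_def algebra_simps)
  then have "g x \<le> ereal (t * a)"
    using convex_efunD_finite[OF convex u zero[unfolded zero_ereal_def] t(1,2)] by simp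
  moreover have "ereal (t * w e) \<le> g x"
    using minorant[of x] by (simp add: x_def blinfun.scaleR_right)
  ultimately obtain c where c: "g x = ereal c" "t * w e \<le> c" "c \<le> t * a"
    by (cases "g x") auto
  have "w e \<le> a" using c(2,3) t(1) by (meson mult_le_cancel_left_pos order_trans)
  define S where "S = sublevel0 g"
  have "xb \<in> S" using zero by (simp add: S_def sublevel0_def)
  moreover have "w (v - xb) \<le> 0" if "v \<in> S" for v
    using that minorant[of v] order_trans[of "ereal (w (v - xb))" "g v" 0] by (simp add: S_def sublevel0_def)
  ultimately have dist_S: "t * w e / norm w \<le> infdist x S"
    using infdist_ge_halfspace[of xb S w x] by (simp add: x_def blinfun.scaleR_right)
  have "0 < norm w" using we by (auto simp: blinfun.zero_left)
  then have "0 < infdist x S" using dist_S t(1) we by (meson divide_pos_pos less_le_trans mult_pos_pos)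
  have "c \<le> t * w e / norm w * (a * norm w / w e)"
    using c(3) \<open>0 < norm w\<close> we by (simp add: field_simps)
  also have "\<dots> \<le> infdist x S * (a * norm w / w e)"
    using dist_S \<open>w e \<le> a\<close> we by (intro mult_right_mono) simp_all
  finally have "c / infdist x S \<le> a * norm w / w e"
    using \<open>0 < infdist x S\<close> by (simp add: pos_divide_le_eq mult.commute)
  then have "g x / edist_set x (sublevel0 g) \<le> ereal (a * norm w / w (u - xb))"
    using c(1) \<open>0 < infdist x S\<close> edist_set_sublevel0[of g xb x] zero by (simp add: S_def e_def)
  moreover have "x \<noteq> xb" and "dist x xb < r" and "g x > 0"
    using t \<open>0 < norm e\<close> c mult_pos_pos[OF t(1) we] by (auto simp: x_def dist_norm)
  ultimately show "\<exists>x \<in> {x. g x > 0}. x \<noteq> xb \<and> dist x xb < r \<and>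
      g x / edist_set x (sublevel0 g) \<le> ereal (a * norm w / w (u - xb))" by blast
qed

lemma frontier_subdiff_nearby_violation:
  assumes "xs \<in> frontier (subdiff f xb)" and "0 < \<delta>"
    and "\<And>x. f x \<noteq> -\<infinity>" and "f xb = 0"
  obtains w u r where "norm w < \<delta>" and "f u = ereal r" and "r < (xs + w) (u - xb)"
proof -
  have "xs \<notin> interior (subdiff f xb)" using assms(1) by (simp add: frontier_def)
  then obtain ys where "dist xs ys < \<delta>" "ys \<notin> subdiff f xb"
    using assms(2) by (auto simp: mem_interior subset_eq)
  then obtain u where u: "f u < ereal (ys (u - xb))" and "norm (ys - xs) < \<delta>"
    using assms(4) by (auto simp: subdiff_def not_le dist_norm norm_minus_commute)
  moreover obtain r where "f u = ereal r"
    using u assms(3)[of u] by (cases "f u") auto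
  ultimately show thesis using u by (intro that[of "ys - xs" u r]) auto
qed

lemma Er_Ptb_l_eq_0_of_frontier:
  fixes f :: "'a::real_normed_vector \<Rightarrow> ereal"
  assumes f: "Gamma0 f" and zero: "f xb = 0"
    and xs: "xs \<in> frontier (subdiff f xb)" and small: "norm xs < \<epsilon>"
  shows "Er_Ptb_l f xb \<epsilon> = 0"
proof (rule antisym[OF ereal_le_epsilon2[of _ 0] Er_Ptb_l_nonneg])
  fix \<eta> :: real assume "0 < \<eta>"
  have not_minf: "\<And>x. f x \<noteq> -\<infinity>" using f by (auto simp: Gamma0_def proper_fun_def)
  have subgradient: "ereal (xs (v - xb)) \<le> f v" for v
  proof -
    have "xs \<in> subdiff f xb" using xs frontier_subset_closed[OF closed_subdiff] by blast
    then show ?thesis using zero by (simp add: subdiff_def)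
  qed
  obtain w u r where w: "norm w < min (\<eta> / 2) (\<epsilon> - norm xs)" and u: "f u = ereal r"
    and r: "r < (xs + w) (u - xb)"
  proof (rule frontier_subdiff_nearby_violation[OF xs _ not_minf zero])
    show "0 < min (\<eta> / 2) (\<epsilon> - norm xs)" using \<open>0 < \<eta>\<close> small by simp
  qed
  have w_pos: "0 < w (u - xb)"
    using subgradient[of u] u r by (simp add: blinfun.add_left)
  define g where "g v = f v + ereal ((w - xs) (v - xb))" for v
  have "norm (w - xs) \<le> \<epsilon>" using norm_triangle_ineq4[of w xs] w by simp
  then have "g \<in> Ptb_l f xb \<epsilon>" unfolding Ptb_l_def g_def by blast
  then have "Er_Ptb_l f xb \<epsilon> \<le> Er g xb" unfolding Er_Ptb_l_def by (rule INF_lower)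
  also have "Er g xb \<le> ereal ((r + (w - xs) (u - xb)) * norm w / w (u - xb))"
  proof (rule Er_le_of_linear_minorant)
    have "Gamma0 g"
      unfolding g_def using Gamma0_add[OF f Gamma0_blinfun_affine[of "w - xs" xb], of xb] zero by simp
    then show "convex_efun g" by (simp add: Gamma0_def)
    show "g xb = 0" using zero by (simp add: g_def)
    show "ereal (w (v - xb)) \<le> g v" for v
      using add_right_mono[OF subgradient[of v], of "ereal ((w - xs) (v - xb))"]
      by (simp add: g_def blinfun.diff_left)
  qed (simp_all add: g_def u w_pos)
  also have "\<dots> \<le> ereal (2 * norm w)"
  proof -
    have "r + (w - xs) (u - xb) \<le> 2 * w (u - xb)" using r by (simp add: blinfun.add_left blinfun.diff_left)
    then have "(r + (w - xs) (u - xb)) * norm w \<le> (2 * w (u - xb)) * norm w"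
      by (rule mult_right_mono) simp
    then show ?thesis using w_pos by (simp add: divide_le_eq mult_ac)
  qed
  also have "\<dots> \<le> 0 + ereal \<eta>" using w by simp
  finally show "Er_Ptb_l f xb \<epsilon> \<le> 0 + ereal \<eta>" .
qed

section \<open>Below the boundary slope every perturbation keeps an error bound\<close>

lemma bd_slope_growth_dichotomy:
  fixes f :: "'a::real_normed_vector \<Rightarrow> ereal"
  assumes f: "Gamma0 f" and zero: "f xb = 0" and b: "0 \<le> b" "ereal b < bd_slope f xb"
  shows "(\<forall>u. ereal (b * norm (u - xb)) \<le> f u) \<or> (\<exists>u. f u < ereal (- b * norm (u - xb)))"
proof (rule ccontr)
  assume "\<not> ?thesis"
  then have minorant: "\<And>u. ereal (- b * norm (u - xb)) \<le> f u"
    and "\<exists>u. f u < ereal (b * norm (u - xb))"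
    by (auto simp: not_le not_less)
  then obtain u where u: "f u < ereal (b * norm (u - xb))" by blast
  have convex: "convex_efun f" and not_minf: "\<And>x. f x \<noteq> -\<infinity>"
    using f by (auto simp: Gamma0_def proper_fun_def)
  obtain ws where ws: "ws \<in> subdiff f xb" "norm ws \<le> b"
    using subdiff_exists_norm_le[OF convex not_minf b(1) zero minorant] by blast
  obtain y0 :: "'a \<Rightarrow>\<^sub>L real" where y0: "norm y0 \<le> 1" "y0 (u - xb) = norm (u - xb)"
    using exists_norming_functional by blast
  define ys where "ys = b *\<^sub>R y0"
  have "ys \<notin> subdiff f xb"
    using u zero y0(2) by (auto simp: subdiff_def ys_def not_le blinfun.scaleR_left intro!: exI[of _ u])
  moreover have "closed_segment ws ys \<inter> subdiff f xb \<noteq> {}" using ws(1) by auto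
  ultimately have "closed_segment ws ys \<inter> frontier (subdiff f xb) \<noteq> {}"
    by (intro connected_Int_frontier) (auto intro: convex_connected)
  then obtain p where p: "p \<in> closed_segment ws ys" "p \<in> frontier (subdiff f xb)" by blast
  have "norm ys \<le> b" using y0(1) b(1) by (simp add: ys_def mult_left_le)
  then have "closed_segment ws ys \<subseteq> cball 0 b"
    using ws(2) by (intro closed_segment_subset) (auto simp: convex_cball)
  then have "norm p \<le> b" using p(1) by auto
  moreover have "bd_slope f xb \<le> ereal (norm p)"
    using p(2) infdist_le[OF p(2), of 0] by (auto simp: bd_slope_def edist_set_def)
  ultimately show False using b(2) by (meson ereal_less_eq(3) leD order_trans)
qed

lemma Er_ge_of_local_growth:
  assumes zero: "g xb \<le> 0" and "0 < \<rho>" and "0 \<le> c"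
    and growth: "\<And>x. x \<noteq> xb \<Longrightarrow> dist x xb < \<rho> \<Longrightarrow> ereal (c * norm (x - xb)) \<le> g x"
  shows "ereal c \<le> Er g xb"
  unfolding Er_def
proof (rule Liminf_at_within_geI[OF \<open>0 < \<rho>\<close>])
  fix x assume x: "x \<in> {x. g x > 0}" "x \<noteq> xb" "dist x xb < \<rho>"
  have "infdist x (sublevel0 g) \<le> norm (x - xb)"
    using infdist_le[of xb "sublevel0 g" x] zero by (simp add: sublevel0_def dist_norm)
  then have "ereal (c * infdist x (sublevel0 g)) \<le> g x"
    using growth[OF x(2,3)] \<open>0 \<le> c\<close> by (meson ereal_less_eq(3) mult_left_mono order_trans)
  then show "ereal c \<le> g x / edist_set x (sublevel0 g)"
    using x(1) \<open>0 \<le> c\<close> zero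
    by (simp add: edist_set_sublevel0 ereal_le_divide_nonneg infdist_nonneg)
qed

lemma convex_efun_sublevel_point_near:
  fixes g :: "'a::real_normed_vector \<Rightarrow> ereal"
  assumes convex: "convex_efun g" and x: "g x = ereal a" "0 < a"
    and w: "g w = ereal v" "v \<le> - d" and "0 < d"
  obtains y where "g y \<le> 0" and "d * dist x y \<le> a * norm (x - w)"
proof -
  define l where "l = a / (a + d)"
  have l: "0 < l" "l < 1" "(1 - l) * a = l * d"
    using x(2) \<open>0 < d\<close> by (auto simp: l_def field_simps)
  define y where "y = l *\<^sub>R w + (1 - l) *\<^sub>R x"
  have "g y \<le> ereal (l * v + (1 - l) * a)"
    unfolding y_def by (rule convex_efunD_finite[OF convex w(1) x(1) l(1,2)])
  moreover have "l * v \<le> l * (- d)" using w(2) l(1) by (intro mult_left_mono) auto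
  ultimately have "g y \<le> 0" using l(3) by (simp add: order_trans zero_ereal_def)
  moreover have "dist x y = l * norm (x - w)"
    using l by (simp add: y_def dist_norm algebra_simps flip: scaleR_diff_right)
  then have "d * dist x y = (1 - l) * a * norm (x - w)" using l(3) by (simp add: ac_simps)
  moreover have "(1 - l) * a * norm (x - w) \<le> a * norm (x - w)"
    using l x(2) by (intro mult_right_mono mult_left_le_one_le) auto
  ultimately show thesis by (intro that) auto
qed

lemma Er_ge_of_uniform_descent:
  fixes g :: "'a::real_normed_vector \<Rightarrow> ereal"
  assumes convex: "convex_efun g" and not_minf: "\<And>x. g x \<noteq> -\<infinity>" and "0 < \<rho>" "0 < c"
    and descent: "\<And>s. 0 < s \<Longrightarrow> s < \<rho> \<Longrightarrow> \<exists>w. norm (w - xb) \<le> s \<and> g w \<le> ereal (- 2 * c * s)"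
  shows "ereal c \<le> Er g xb"
  unfolding Er_def
proof (rule Liminf_at_within_geI[OF \<open>0 < \<rho>\<close>])
  fix x assume x: "x \<in> {x. g x > 0}" "x \<noteq> xb" "dist x xb < \<rho>"
  define s where "s = norm (x - xb)"
  have s: "0 < s" "s < \<rho>" using x by (auto simp: s_def dist_norm)
  obtain w where w: "norm (w - xb) \<le> s" "g w \<le> ereal (- 2 * c * s)" using descent[OF s] by blast
  then obtain v where v: "g w = ereal v" "v \<le> - (2 * c * s)" using not_minf[of w] by (cases "g w") auto
  have "norm (x - w) \<le> 2 * s"
    using norm_triangle_ineq4[of "x - xb" "w - xb"] w(1) by (simp add: s_def)
  have "\<exists>y. g y \<le> 0 \<and> ereal (c * dist x y) \<le> g x"
  proof (cases "g x")
    case (real a)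
    then have "0 < a" using x(1) by simp
    then obtain y where y: "g y \<le> 0" "2 * c * s * dist x y \<le> a * norm (x - w)"
      using convex_efun_sublevel_point_near[OF convex real _ v] \<open>0 < c\<close> s(1) by auto
    moreover have "a * norm (x - w) \<le> a * (2 * s)" using \<open>norm (x - w) \<le> 2 * s\<close> \<open>0 < a\<close> by simp
    ultimately have "(2 * s) * (c * dist x y) \<le> (2 * s) * a" by (simp add: ac_simps)
    then have "c * dist x y \<le> a" using s(1) by simp
    then show ?thesis using y(1) real by auto
  next
    case PInf
    have "g w \<le> 0" using w(2) \<open>0 < c\<close> s(1) by (simp add: order_trans zero_ereal_def)
    then show ?thesis using PInf by auto
  qed (use x(1) in simp)
  then obtain y where "g y \<le> 0" "ereal (c * dist x y) \<le> g x" by blast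
  moreover have "c * infdist x (sublevel0 g) \<le> c * dist x y"
    using infdist_le[of y "sublevel0 g" x] \<open>g y \<le> 0\<close> \<open>0 < c\<close> by (simp add: sublevel0_def)
  ultimately have "ereal (c * infdist x (sublevel0 g)) \<le> g x" by (meson ereal_less_eq(3) order_trans)
  then show "ereal c \<le> g x / edist_set x (sublevel0 g)"
    using x(1) \<open>0 < c\<close> \<open>g y \<le> 0\<close>
    by (auto simp: edist_set_def sublevel0_def intro!: ereal_le_divide_nonneg infdist_nonneg)
qed

lemma Ptb_uniform_descent:
  fixes f g :: "'a::real_normed_vector \<Rightarrow> ereal"
  assumes convex: "convex_efun f" and not_minf: "\<And>x. f x \<noteq> -\<infinity>" and zero: "f xb = 0"
    and u0: "f u0 < ereal (- b * norm (u0 - xb))" and g: "g \<in> Ptb f xb \<epsilon>" and "\<epsilon> < e"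
  obtains \<rho> where "0 < \<rho>"
    and "\<And>s. 0 < s \<Longrightarrow> s < \<rho> \<Longrightarrow> \<exists>w. norm (w - xb) \<le> s \<and> g w \<le> ereal (- (b - e) * s)"
proof -
  obtain \<rho> where "0 < \<rho>" and close: "\<And>x. x \<noteq> xb \<Longrightarrow> dist x xb < \<rho> \<Longrightarrow>
      g x \<le> f x + ereal (e * norm (x - xb))"
    using Ptb_local_bounds[OF g \<open>\<epsilon> < e\<close>] by metis
  obtain F where F: "f u0 = ereal F" using u0 not_minf[of u0] by (cases "f u0") auto
  define n where "n = norm (u0 - xb)"
  have F_less: "F < - b * n" using u0 F by (simp add: n_def)
  have "0 < n" using F_less F zero by (cases "u0 = xb") (auto simp: n_def)
  have "\<exists>w. norm (w - xb) \<le> s \<and> g w \<le> ereal (- (b - e) * s)" if s: "0 < s" "s < min \<rho> n" for s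
  proof -
    define t where "t = s / n"
    have t: "0 < t" "t < 1" using s \<open>0 < n\<close> by (auto simp: t_def)
    define w where "w = t *\<^sub>R u0 + (1 - t) *\<^sub>R xb"
    have "w - xb = t *\<^sub>R (u0 - xb)" by (simp add: w_def algebra_simps)
    then have w_norm: "norm (w - xb) = s" using s(1) \<open>0 < n\<close> by (simp add: t_def n_def)
    have "t * F \<le> t * (- b * n)" using F_less t by (intro mult_left_mono) auto
    also have "\<dots> = - b * s" using \<open>0 < n\<close> by (simp add: t_def)
    finally have "f w \<le> ereal (- b * s)"
      using convex_efunD_finite[OF convex F zero[unfolded zero_ereal_def] t] by (simp add: w_def order_trans)
    moreover have "g w \<le> f w + ereal (e * s)"
      using close[of w] w_norm s by (auto simp: dist_norm)
    ultimately have "g w \<le> ereal (- b * s) + ereal (e * s)" by (meson add_right_mono order_trans)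
    then show ?thesis using w_norm by (intro exI[of _ w]) (simp add: algebra_simps)
  qed
  then show thesis using \<open>0 < \<rho>\<close> \<open>0 < n\<close> by (intro that[of "min \<rho> n"]) auto
qed

lemma Ptb_local_growth:
  fixes f g :: "'a::real_normed_vector \<Rightarrow> ereal"
  assumes growth: "\<And>u. ereal (b * norm (u - xb)) \<le> f u" and g: "g \<in> Ptb f xb \<epsilon>" and "\<epsilon> < e"
  obtains \<rho> where "0 < \<rho>"
    and "\<And>x. x \<noteq> xb \<Longrightarrow> dist x xb < \<rho> \<Longrightarrow> ereal ((b - e) * norm (x - xb)) \<le> g x"
proof -
  obtain \<rho> where "0 < \<rho>" and close: "\<And>x. x \<noteq> xb \<Longrightarrow> dist x xb < \<rho> \<Longrightarrow>
      f x \<le> g x + ereal (e * norm (x - xb))"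
    using Ptb_local_bounds[OF g \<open>\<epsilon> < e\<close>] by metis
  have "ereal ((b - e) * norm (x - xb)) \<le> g x" if "x \<noteq> xb" "dist x xb < \<rho>" for x
  proof -
    have "ereal (b * norm (x - xb)) \<le> g x + ereal (e * norm (x - xb))"
      using growth close[OF that] order_trans by blast
    then show ?thesis by (cases "g x") (auto simp: algebra_simps)
  qed
  then show thesis using \<open>0 < \<rho>\<close> by (rule that[rotated])
qed

lemma Er_Ptb_pos_below_bd_slope:
  fixes f :: "'a::real_normed_vector \<Rightarrow> ereal"
  assumes f: "Gamma0 f" and zero: "f xb = 0" and "0 < \<epsilon>" and below: "ereal \<epsilon> < bd_slope f xb"
  shows "0 < Er_Ptb f xb \<epsilon>"
proof -
  have convex: "convex_efun f" and not_minf: "\<And>x. f x \<noteq> -\<infinity>"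
    using f by (auto simp: Gamma0_def proper_fun_def)
  obtain b where b: "\<epsilon> < b" "ereal b < bd_slope f xb" using ereal_dense2[OF below] by auto
  define e where "e = (\<epsilon> + b) / 2"
  define c where "c = (b - e) / 2"
  have e: "\<epsilon> < e" "e < b" and "0 < c" using b by (auto simp: e_def c_def)
  have "ereal c \<le> Er g xb" if g: "Gamma0 g" "g \<in> Ptb f xb \<epsilon>" for g
  proof -
    have "0 \<le> b" using \<open>0 < \<epsilon>\<close> b(1) by simp
    then consider (growth) "\<forall>u. ereal (b * norm (u - xb)) \<le> f u"
      | (descent) u0 where "f u0 < ereal (- b * norm (u0 - xb))"
      using bd_slope_growth_dichotomy[OF f zero _ b(2)] by blast
    then show ?thesis
    proof cases
      case growth
      obtain \<rho> where "0 < \<rho>" and "\<And>x. x \<noteq> xb \<Longrightarrow> dist x xb < \<rho> \<Longrightarrow>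
          ereal ((b - e) * norm (x - xb)) \<le> g x"
        using Ptb_local_growth[OF _ g(2) e(1)] growth by blast
      moreover have "g xb \<le> 0" using g(2) zero by (simp add: Ptb_def)
      ultimately have "ereal (b - e) \<le> Er g xb" using e by (intro Er_ge_of_local_growth) auto
      moreover have "c \<le> b - e" using e by (simp add: c_def)
      ultimately show ?thesis by (meson ereal_less_eq(3) order_trans)
    next
      case descent
      obtain \<rho> where "0 < \<rho>" and descent: "\<And>s. 0 < s \<Longrightarrow> s < \<rho> \<Longrightarrow>
          \<exists>w. norm (w - xb) \<le> s \<and> g w \<le> ereal (- (b - e) * s)"
        using Ptb_uniform_descent[OF convex not_minf zero descent g(2) e(1)] by blast
      have "- (b - e) * s = - 2 * c * s" for s by (simp add: c_def)
      then show ?thesis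
        using g(1) descent \<open>0 < \<rho>\<close> \<open>0 < c\<close>
        by (intro Er_ge_of_uniform_descent) (auto simp: Gamma0_def proper_fun_def)
    qed
  qed
  then have "ereal c \<le> Er_Ptb f xb \<epsilon>" unfolding Er_Ptb_def by (intro INF_greatest) blast
  moreover have "0 < ereal c" using \<open>0 < c\<close> by simp
  ultimately show ?thesis by (rule order.strict_trans2[rotated])
qed

lemma bd_slope_le_Inf_Er_Ptb:
  assumes "Gamma0 f" and "f xb = 0"
  shows "bd_slope f xb \<le> Inf {ereal \<epsilon> | \<epsilon>. \<epsilon> > 0 \<and> Er_Ptb f xb \<epsilon> = 0}"
proof (rule Inf_greatest, clarify)
  fix \<epsilon> :: real assume "\<epsilon> > 0" "Er_Ptb f xb \<epsilon> = 0"
  then show "bd_slope f xb \<le> ereal \<epsilon>"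
    using Er_Ptb_pos_below_bd_slope[OF assms, of \<epsilon>] by (auto simp: not_le[symmetric])
qed

lemma Inf_Er_Ptb_l_le_bd_slope:
  assumes "Gamma0 f" and "f xb = 0"
  shows "Inf {ereal \<epsilon> | \<epsilon>. \<epsilon> > 0 \<and> Er_Ptb_l f xb \<epsilon> = 0} \<le> bd_slope f xb"
proof (rule dense_ge)
  fix y assume less: "bd_slope f xb < y"
  show "Inf {ereal \<epsilon> | \<epsilon>. \<epsilon> > 0 \<and> Er_Ptb_l f xb \<epsilon> = 0} \<le> y"
  proof (cases y)
    case (real \<epsilon>)
    then have "frontier (subdiff f xb) \<noteq> {}" and "infdist 0 (frontier (subdiff f xb)) < \<epsilon>"
      using less by (auto simp: bd_slope_def edist_set_def split: if_splits)
    moreover have "bdd_below (norm ` frontier (subdiff f xb))" by (rule bdd_belowI[of _ 0]) auto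
    ultimately obtain xs where xs: "xs \<in> frontier (subdiff f xb)" "norm xs < \<epsilon>"
      by (auto simp: infdist_notempty cINF_less_iff)
    moreover have "0 < \<epsilon>" using xs(2) norm_ge_zero[of xs] by linarith
    ultimately have "ereal \<epsilon> \<in> {ereal \<epsilon> | \<epsilon>. \<epsilon> > 0 \<and> Er_Ptb_l f xb \<epsilon> = 0}"
      using Er_Ptb_l_eq_0_of_frontier[OF assms xs] by auto
    then show ?thesis using real by (auto intro: Inf_lower)
  qed (use less in auto)
qed

theorem mainTheorem2:
  fixes f :: "'a::banach \<Rightarrow> ereal" and xb :: 'a
  assumes "Gamma0 f" and "f xb = 0"
  shows "bd_slope f xb = Inf {ereal \<epsilon> | \<epsilon>. \<epsilon> > 0 \<and> Er_Ptb f xb \<epsilon> = 0}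
       \<and> Inf {ereal \<epsilon> | \<epsilon>. \<epsilon> > 0 \<and> Er_Ptb f xb \<epsilon> = 0}
           = Inf {ereal \<epsilon> | \<epsilon>. \<epsilon> > 0 \<and> Er_Ptb_c f xb \<epsilon> = 0}
       \<and> Inf {ereal \<epsilon> | \<epsilon>. \<epsilon> > 0 \<and> Er_Ptb_c f xb \<epsilon> = 0}
           = Inf {ereal \<epsilon> | \<epsilon>. \<epsilon> > 0 \<and> Er_Ptb_l f xb \<epsilon> = 0}"
proof -
  let ?I = "Inf {ereal \<epsilon> | \<epsilon>. \<epsilon> > 0 \<and> Er_Ptb f xb \<epsilon> = 0}"
  let ?I\<^sub>c = "Inf {ereal \<epsilon> | \<epsilon>. \<epsilon> > 0 \<and> Er_Ptb_c f xb \<epsilon> = 0}"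
  let ?I\<^sub>l = "Inf {ereal \<epsilon> | \<epsilon>. \<epsilon> > 0 \<and> Er_Ptb_l f xb \<epsilon> = 0}"
  have "bd_slope f xb \<le> ?I" by (rule bd_slope_le_Inf_Er_Ptb[OF assms])
  moreover have "?I \<le> ?I\<^sub>c"
    by (rule Inf_zero_level_mono[of "Er_Ptb f xb"]) (simp_all add: Er_Ptb_nonneg Er_Ptb_le_Er_Ptb_c assms)
  moreover have "?I\<^sub>c \<le> ?I\<^sub>l"
    by (rule Inf_zero_level_mono[of "Er_Ptb_c f xb"]) (simp_all add: Er_Ptb_c_nonneg Er_Ptb_c_le_Er_Ptb_l assms)
  moreover have "?I\<^sub>l \<le> bd_slope f xb" by (rule Inf_Er_Ptb_l_le_bd_slope[OF assms])
  ultimately show ?thesis by (meson antisym order_trans)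
qed

end
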